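(* Consider a generic device in the steady state of the frame-slotted system described in the context, with $M\ge 1$ slots per frame, harvesting probability $\eta\in[0,1]$, maximum degree $\ell_{\max}$, conditional degree distribution $\{\Lambda_{\ell,b}\}$ and steady-state initial battery distribution $\phi=(\phi_0,\dots,\phi_E)$. Then the packet loss rate $P_e$ satisfies $P_e\ge \underline{P_e}$, where $$\underline{P_e}=\phi_0\left(\sum_{y=1}^{M}\eta(1-\eta)^{y-1}\sum_{\ell=0}^{\ell_{\max}}\Lambda_{\ell,0}\,\frac{(y-1)!\,(M-\ell)!}{(y-\ell-1)!\,M!}+(1-\eta)^M\right),$$ with the convention that the factor $\frac{(y-1)!}{(y-\ell-1)!}$ equals $0$ whenever $\ell>y-1$ (so the degree-$0$ term has ratio equal to $1$).
   Context: Time is slotted and grouped into frames of $M$ slots. Each device has a battery of capacity $E$ energy units; each packet (replica) transmission consumes one energy unit. In each slot, independently across slots and devices, a device harvests one energy unit with probability $\eta$ (harvesting pauses when the battery is full); an energy unit harvested in slot $y$ of a frame can be used for a transmission in slot $y$ or later. The initial battery level $B\in\{0,\dots,E\}$ of a device is its battery level at the beginning of a frame; at steady state $\mathbb{P}[B=b]=\phi_b$, and whether a device is active (has an update to send) in a frame is independent of $B$. An active device with initial battery level $b$ draws a degree $L$ with $\mathbb{P}[L=\ell\mid B=b]=\Lambda_{\ell,b}$, $\ell\in\{0,\dots,\ell_{\max}\}$, and then chooses $L$ distinct slots of the frame uniformly at random without replacement (independently of the harvesting process) as the intended positions of $L$ identical replicas of its update. A replica is actually transmitted only if the device has at least one energy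 unit available in that slot; otherwise it is dropped. Degree $0$ means the update is discarded. The packet loss rate $P_e$ is the steady-state probability that the update of an active device in a frame is not successfully decoded by the receiver (in particular, it is lost if the degree is $0$ or if all its intended replicas are dropped). *)

theory Defs
  imports "HOL-Probability.Probability"
begin

(* Outcome of one active device in one frame:
   (initial battery B, degree L, set S of chosen slots in {1..M}, harvest coins H),
   where H y = True means a unit of energy arrives in slot y (if battery not full). *)
type_synonym dev_outcome = "nat \<times> nat \<times> nat set \<times> (nat \<Rightarrow> bool)"

definition device_pmf ::
  "nat \<Rightarrow> real \<Rightarrow> nat pmf \<Rightarrow> (nat \<Rightarrow> nat pmf) \<Rightarrow> dev_outcome pmf" where
  "device_pmf M \<eta> phi Lam =
     bind_pmf phi (\<lambda>b.
     bind_pmf (Lam b) (\<lambda>l.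
     bind_pmf (pmf_of_set {S. S \<subseteq> {1..M} \<and> card S = l}) (\<lambda>S.
     bind_pmf (Pi_pmf {1..M} False (\<lambda>_. bernoulli_pmf \<eta>)) (\<lambda>H.
     return_pmf (b, l, S, H)))))"

(* energy available in slot y (after the harvest of slot y, before transmitting)
   and battery level at the end of slot y; slot 0 = beginning of frame *)
fun batt_end :: "nat \<Rightarrow> nat \<Rightarrow> nat set \<Rightarrow> (nat \<Rightarrow> bool) \<Rightarrow> nat \<Rightarrow> nat" where
  "batt_end E b S H 0 = b"
| "batt_end E b S H (Suc y) =
     (let h = (if H (Suc y) \<and> batt_end E b S H y < E then batt_end E b S H y + 1
               else batt_end E b S H y)
      in if Suc y \<in> S \<and> 1 \<le> h then h - 1 else h)"

definition avail :: "nat \<Rightarrow> nat \<Rightarrow> nat set \<Rightarrow> (nat \<Rightarrow> bool) \<Rightarrow> nat \<Rightarrow> nat" where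
  "avail E b S H y =
     (if H y \<and> batt_end E b S H (y - 1) < E then batt_end E b S H (y - 1) + 1
      else batt_end E b S H (y - 1))"

definition transmitted :: "nat \<Rightarrow> nat \<Rightarrow> dev_outcome \<Rightarrow> nat set" where
  "transmitted E M x = (case x of (b, l, S, H) \<Rightarrow>
     {y \<in> S. 1 \<le> y \<and> y \<le> M \<and> 1 \<le> avail E b S H y})"

definition ratio :: "nat \<Rightarrow> nat \<Rightarrow> nat \<Rightarrow> real" where
  "ratio M y l = (if l \<le> y - 1
     then fact (y - 1) * fact (M - l) / (fact (y - 1 - l) * fact M) else 0)"

definition Pe_lower :: "nat \<Rightarrow> real \<Rightarrow> nat \<Rightarrow> nat pmf \<Rightarrow> (nat \<Rightarrow> nat pmf) \<Rightarrow> real" where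
  "Pe_lower M \<eta> lmax phi Lam =
     pmf phi 0 * ((\<Sum>y=1..M. \<eta> * (1 - \<eta>) ^ (y - 1) *
                      (\<Sum>l=0..lmax. pmf (Lam 0) l * ratio M y l))
                  + (1 - \<eta>) ^ M)"

end

theory Submission
  imports Defs
begin

text \<open>A device whose battery is empty at the start of the frame loses its update whenever
  nothing is harvested, or every intended slot precedes the first harvest: until then the battery
  stays empty and each replica is dropped. The first harvest falls in slot y with geometric
  probability \<eta>(1 - \<eta>)^(y-1), and a uniform l-subset of {1..M} lies in {1..y-1} with
  probability C(y-1, l) / C(M, l), which is the ratio in the bound. Averaging over the degree and
  weighting by \<phi>_0 shows that the bound is exactly the probability of this event.\<close>

lemma measure_bind_pmf:
  "measure_pmf.prob (bind_pmf p f) A = (\<integral>x. measure_pmf.prob (f x) A \<partial>p)"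
  unfolding measure_pmf_bind
  by (subst measure_pmf.measure_bind[where N="count_space UNIV"])
     (auto simp: space_subprob_algebra measure_pmf_in_subprob_algebra
           intro: prob_space_imp_subprob_space measure_pmf.prob_space_axioms)

lemma prod_if_disjoint:
  fixes a c :: "'b::comm_monoid_mult"
  assumes "finite A" "B \<subseteq> A" "C \<subseteq> A" "B \<inter> C = {}"
  shows "(\<Prod>z\<in>A. if z \<in> B then a else if z \<in> C then c else 1) = a ^ card B * c ^ card C"
proof -
  have "(\<Prod>z\<in>A. if z \<in> B then a else if z \<in> C then c else 1)
      = (\<Prod>z\<in>A \<inter> {z. z \<in> B}. a) * (\<Prod>z\<in>A \<inter> - {z. z \<in> B}. if z \<in> C then c else 1)"
    by (rule prod.If_cases[OF assms(1)])
  also have "(\<Prod>z\<in>A \<inter> - {z. z \<in> B}. if z \<in> C then c else 1)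
      = (\<Prod>z\<in>A \<inter> - {z. z \<in> B} \<inter> {z. z \<in> C}. c) * (\<Prod>z\<in>A \<inter> - {z. z \<in> B} \<inter> - {z. z \<in> C}. 1)"
    using assms(1) by (intro prod.If_cases) simp
  also have "A \<inter> {z. z \<in> B} = B"
    using assms(2) by blast
  also have "A \<inter> - {z. z \<in> B} \<inter> {z. z \<in> C} = C"
    using assms(3,4) by blast
  finally show ?thesis by simp
qed

lemma measure_Pi_pmf_bernoulli_pattern:
  fixes \<eta> :: real
  assumes "finite A" "B \<subseteq> A" "C \<subseteq> A" "B \<inter> C = {}" "0 \<le> \<eta>" "\<eta> \<le> 1"
  shows "measure_pmf.prob (Pi_pmf A False (\<lambda>_. bernoulli_pmf \<eta>))
           {H. (\<forall>z\<in>B. \<not> H z) \<and> (\<forall>z\<in>C. H z)} = (1 - \<eta>) ^ card B * \<eta> ^ card C"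
proof -
  let ?P = "Pi_pmf A False (\<lambda>_. bernoulli_pmf \<eta>)"
  define D where "D = (\<lambda>z. if z \<in> B then {False} else if z \<in> C then {True} else UNIV)"
  have in_D: "H z \<in> D z \<longleftrightarrow> (z \<in> B \<longrightarrow> \<not> H z) \<and> (z \<in> C \<longrightarrow> H z)" for H z
    using assms(4) by (auto simp: D_def)
  have PiE_iff: "H \<in> PiE_dflt A False D \<longleftrightarrow> (\<forall>z\<in>B. \<not> H z) \<and> (\<forall>z\<in>C. H z)"
    if "H \<in> set_pmf ?P" for H
  proof -
    have "H \<in> {f. \<forall>z. z \<notin> A \<longrightarrow> f z = False}"
      using set_Pi_pmf_subset[OF assms(1), of False "\<lambda>_. bernoulli_pmf \<eta>"] that by (rule subsetD)
    then have "H \<in> PiE_dflt A False D \<longleftrightarrow> (\<forall>z\<in>A. H z \<in> D z)"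
      unfolding PiE_dflt_def by auto
    also have "\<dots> \<longleftrightarrow> (\<forall>z\<in>B. \<not> H z) \<and> (\<forall>z\<in>C. H z)"
      using assms(2,3) unfolding in_D by auto
    finally show ?thesis .
  qed
  have "measure_pmf.prob ?P {H. (\<forall>z\<in>B. \<not> H z) \<and> (\<forall>z\<in>C. H z)}
      = measure_pmf.prob ?P (PiE_dflt A False D)"
  proof (rule measure_pmf.finite_measure_eq_AE)
    show "AE H in ?P. H \<in> {H. (\<forall>z\<in>B. \<not> H z) \<and> (\<forall>z\<in>C. H z)} \<longleftrightarrow> H \<in> PiE_dflt A False D"
      by (rule AE_pmfI) (simp only: PiE_iff mem_Collect_eq)
  qed simp_all
  also have "\<dots> = (\<Prod>z\<in>A. measure_pmf.prob (bernoulli_pmf \<eta>) (D z))"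
    by (rule measure_Pi_pmf_PiE_dflt[OF assms(1)])
  also have "\<dots> = (\<Prod>z\<in>A. if z \<in> B then 1 - \<eta> else if z \<in> C then \<eta> else 1)"
    using assms(4-6) by (intro prod.cong) (auto simp: D_def measure_pmf_single)
  also have "\<dots> = (1 - \<eta>) ^ card B * \<eta> ^ card C"
    by (rule prod_if_disjoint[OF assms(1-4)])
  finally show ?thesis .
qed

lemma measure_pmf_of_set_subsets_within:
  assumes "finite A" "B \<subseteq> A" "l \<le> card A"
  shows "measure_pmf.prob (pmf_of_set {S. S \<subseteq> A \<and> card S = l}) {S. S \<subseteq> B}
           = real (card B choose l) / real (card A choose l)"
proof -
  have "finite {S. S \<subseteq> A \<and> card S = l}"
    using assms(1) by (simp add: finite_subset[of _ "Pow A"] subset_iff)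
  moreover have "{S. S \<subseteq> A \<and> card S = l} \<noteq> {}"
    using obtain_subset_with_card_n[OF assms(3)] by blast
  moreover have "{S. S \<subseteq> A \<and> card S = l} \<inter> {S. S \<subseteq> B} = {S. S \<subseteq> B \<and> card S = l}"
    using assms(2) by auto
  ultimately show ?thesis
    using assms(1,2) by (simp add: measure_pmf_of_set n_subsets finite_subset)
qed

lemma ratio_eq_choose_quotient:
  assumes "l \<le> M"
  shows "ratio M y l = real ((y - 1) choose l) / real (M choose l)"
proof (cases "l \<le> y - 1")
  case True
  then show ?thesis
    using assms by (simp add: ratio_def binomial_fact divide_simps)
next
  case False
  then show ?thesis by (simp add: ratio_def)
qed

lemma batt_end_eq_0_if_no_harvest:
  "\<forall>z\<in>{1..y}. \<not> H z \<Longrightarrow> batt_end E 0 S H y = 0"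
  by (induction y) (auto simp: Let_def)

lemma avail_eq_0_if_no_harvest:
  assumes "1 \<le> y" "\<forall>z\<in>{1..y}. \<not> H z"
  shows "avail E 0 S H y = 0"
proof -
  have "batt_end E 0 S H (y - 1) = 0"
    using assms(2) by (intro batt_end_eq_0_if_no_harvest) auto
  then show ?thesis
    using assms by (auto simp: avail_def)
qed

definition before_first_harvest :: "nat \<Rightarrow> nat set \<Rightarrow> (nat \<Rightarrow> bool) \<Rightarrow> bool" where
  "before_first_harvest M S H \<longleftrightarrow>
     (\<forall>z\<in>{1..M}. \<not> H z) \<or> (\<exists>y\<in>{1..M}. H y \<and> (\<forall>z\<in>{1..<y}. \<not> H z) \<and> S \<subseteq> {1..<y})"

lemma transmitted_eq_empty_if_before_first_harvest:
  assumes "before_first_harvest M S H"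
  shows "transmitted E M (0, l, S, H) = {}"
proof -
  have "avail E 0 S H t = 0" if "t \<in> S" "1 \<le> t" "t \<le> M" for t
  proof -
    from assms consider (never) "\<forall>z\<in>{1..M}. \<not> H z"
      | (later) y where "y \<in> {1..M}" "\<forall>z\<in>{1..<y}. \<not> H z" "S \<subseteq> {1..<y}"
      unfolding before_first_harvest_def by blast
    then show ?thesis
    proof cases
      case never
      then show ?thesis using that by (intro avail_eq_0_if_no_harvest) auto
    next
      case later
      then have "t < y" using that by auto
      with later show ?thesis using that by (intro avail_eq_0_if_no_harvest) auto
    qed
  qed
  then show ?thesis by (auto simp: transmitted_def)
qed

lemma measure_before_first_harvest:
  fixes \<eta> :: real
  assumes "0 \<le> \<eta>" "\<eta> \<le> 1"
  shows "measure_pmf.prob (Pi_pmf {1..M} False (\<lambda>_. bernoulli_pmf \<eta>)) {H. before_first_harvest M S H}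
     = (\<Sum>y=1..M. \<eta> * (1 - \<eta>) ^ (y - 1) * indicator {S. S \<subseteq> {1..<y}} S) + (1 - \<eta>) ^ M"
proof -
  let ?P = "Pi_pmf {1..M} False (\<lambda>_. bernoulli_pmf \<eta>)"
  define never where "never = {H. (\<forall>z\<in>{1..M}. \<not> H z) \<and> (\<forall>z\<in>{}. H z)}"
  define first where "first y = {H. (\<forall>z\<in>{1..<y}. \<not> H z) \<and> (\<forall>z\<in>{y}. H z)}" for y :: nat
  define I where "I = {y \<in> {1..M}. S \<subseteq> {1..<y}}"
  have split: "{H. before_first_harvest M S H} = never \<union> (\<Union>y\<in>I. first y)"
    unfolding before_first_harvest_def never_def first_def I_def by blast
  have "disjoint_family_on first I"
    unfolding disjoint_family_on_def
  proof (intro ballI impI)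
    fix m n assume "m \<in> I" "n \<in> I" "m \<noteq> n"
    then consider "m < n" | "n < m"
      by linarith
    then show "first m \<inter> first n = {}"
      by cases (use \<open>m \<in> I\<close> \<open>n \<in> I\<close> in \<open>auto simp: first_def I_def\<close>)
  qed
  moreover have "never \<inter> (\<Union>y\<in>I. first y) = {}"
    by (auto simp: never_def first_def I_def)
  ultimately have "measure_pmf.prob ?P {H. before_first_harvest M S H}
      = measure_pmf.prob ?P never + (\<Sum>y\<in>I. measure_pmf.prob ?P (first y))"
    unfolding split
    by (simp add: measure_pmf.finite_measure_Union measure_pmf.finite_measure_finite_Union I_def)
  also have "measure_pmf.prob ?P never = (1 - \<eta>) ^ M"
    unfolding never_def using assms by (subst measure_Pi_pmf_bernoulli_pattern) auto
  also have "(\<Sum>y\<in>I. measure_pmf.prob ?P (first y)) = (\<Sum>y\<in>I. \<eta> * (1 - \<eta>) ^ (y - 1))"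
    unfolding first_def using assms
    by (intro sum.cong refl, subst measure_Pi_pmf_bernoulli_pattern) (auto simp: I_def)
  also have "\<dots> = (\<Sum>y=1..M. if S \<subseteq> {1..<y} then \<eta> * (1 - \<eta>) ^ (y - 1) else 0)"
    unfolding I_def
    by (rule sum.inter_filter[where A = "{1..M}" and P = "\<lambda>y. S \<subseteq> {1..<y}"]) simp
  also have "\<dots> = (\<Sum>y=1..M. \<eta> * (1 - \<eta>) ^ (y - 1) * indicator {S. S \<subseteq> {1..<y}} S)"
    by (rule sum.cong) (simp_all add: indicator_def)
  finally show ?thesis by linarith
qed

lemma expectation_before_first_harvest_random_slots:
  fixes \<eta> :: real
  assumes "0 \<le> \<eta>" "\<eta> \<le> 1" "l \<le> M"
  shows "(\<integral>S. measure_pmf.prob (Pi_pmf {1..M} False (\<lambda>_. bernoulli_pmf \<eta>))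
                 {H. before_first_harvest M S H} \<partial>pmf_of_set {S. S \<subseteq> {1..M} \<and> card S = l})
       = (\<Sum>y=1..M. \<eta> * (1 - \<eta>) ^ (y - 1) * ratio M y l) + (1 - \<eta>) ^ M"
proof -
  define Q where "Q = pmf_of_set {S. S \<subseteq> {1..M} \<and> card S = (l::nat)}"
  have "finite {S. S \<subseteq> {1..M} \<and> card S = l}"
    by (simp add: finite_subset[of _ "Pow {1..M}"] subset_iff)
  moreover have "{S. S \<subseteq> {1..M} \<and> card S = l} \<noteq> {}"
    using obtain_subset_with_card_n[of l "{1..M}"] assms(3) by auto
  ultimately have integrable: "integrable (measure_pmf Q) f" for f :: "nat set \<Rightarrow> real"
    unfolding Q_def by (intro integrable_measure_pmf_finite) simp
  have prob_UNIV: "measure_pmf.prob Q UNIV = 1"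
    using measure_pmf.prob_space[of Q] by simp
  have prob_within: "measure_pmf.prob Q {S. S \<subseteq> {1..<y}} = ratio M y l" if "y \<in> {1..M}" for y
    using that assms(3) unfolding Q_def
    by (subst measure_pmf_of_set_subsets_within) (auto simp: ratio_eq_choose_quotient)
  have "(\<integral>S. measure_pmf.prob (Pi_pmf {1..M} False (\<lambda>_. bernoulli_pmf \<eta>))
                 {H. before_first_harvest M S H} \<partial>Q)
      = (\<integral>S. (\<Sum>y=1..M. \<eta> * (1 - \<eta>) ^ (y - 1) * indicator {S. S \<subseteq> {1..<y}} S) + (1 - \<eta>) ^ M \<partial>Q)"
    by (simp only: measure_before_first_harvest[OF assms(1,2)])
  also have "\<dots> = (\<Sum>y=1..M. \<eta> * (1 - \<eta>) ^ (y - 1) * measure_pmf.prob Q {S. S \<subseteq> {1..<y}}) + (1 - \<eta>) ^ M"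
    by (simp only: Bochner_Integration.integral_add[OF integrable integrable]
        Bochner_Integration.integral_sum[OF integrable]
        integral_mult_right_zero Bochner_Integration.integral_indicator lebesgue_integral_const
        space_measure_pmf Int_UNIV_right prob_UNIV scaleR_one)
  also have "(\<Sum>y=1..M. \<eta> * (1 - \<eta>) ^ (y - 1) * measure_pmf.prob Q {S. S \<subseteq> {1..<y}})
      = (\<Sum>y=1..M. \<eta> * (1 - \<eta>) ^ (y - 1) * ratio M y l)"
    by (rule sum.cong[OF refl]) (simp only: prob_within)
  finally show ?thesis unfolding Q_def .
qed

lemma measure_empty_battery_before_first_harvest:
  fixes \<eta> :: real and L :: "nat pmf"
  assumes "0 \<le> \<eta>" "\<eta> \<le> 1" "lmax \<le> M" "set_pmf L \<subseteq> {0..lmax}"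
  shows "measure_pmf.prob
           (bind_pmf L (\<lambda>l. bind_pmf (pmf_of_set {S. S \<subseteq> {1..M} \<and> card S = l}) (\<lambda>S.
              bind_pmf (Pi_pmf {1..M} False (\<lambda>_. bernoulli_pmf \<eta>)) (\<lambda>H. return_pmf (0::nat, l, S, H)))))
           {(b, l, S, H). b = 0 \<and> before_first_harvest M S H}
       = (\<Sum>y=1..M. \<eta> * (1 - \<eta>) ^ (y - 1) * (\<Sum>l=0..lmax. pmf L l * ratio M y l)) + (1 - \<eta>) ^ M"
proof -
  define G :: "dev_outcome set" where "G = {(b, l, S, H). b = 0 \<and> before_first_harvest M S H}"
  define PH where "PH = Pi_pmf {1..M} False (\<lambda>_. bernoulli_pmf \<eta>)"
  define SS where "SS l = {S. S \<subseteq> {1..M} \<and> card S = l}" for l :: nat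
  define c where "c y = \<eta> * (1 - \<eta>) ^ (y - 1)" for y :: nat
  define D where "D l = bind_pmf (pmf_of_set (SS l)) (\<lambda>S. map_pmf (\<lambda>H. (0::nat, l, S, H)) PH)" for l
  have given_degree: "measure_pmf.prob (D l) G = (\<Sum>y=1..M. c y * ratio M y l) + (1 - \<eta>) ^ M"
    if "l \<le> M" for l
  proof -
    have preimage: "(\<lambda>H. (0, l, S, H)) -` G = {H. before_first_harvest M S H}" for S
      by (auto simp: G_def)
    have "measure_pmf.prob (D l) G
        = (\<integral>S. measure_pmf.prob (map_pmf (\<lambda>H. (0, l, S, H)) PH) G \<partial>pmf_of_set (SS l))"
      unfolding D_def by (rule measure_bind_pmf)
    also have "\<dots> = (\<integral>S. measure_pmf.prob PH {H. before_first_harvest M S H} \<partial>pmf_of_set (SS l))"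
      by (simp only: measure_map_pmf preimage)
    also have "\<dots> = (\<Sum>y=1..M. c y * ratio M y l) + (1 - \<eta>) ^ M"
      unfolding SS_def PH_def c_def by (rule expectation_before_first_harvest_random_slots[OF assms(1,2) that])
    finally show ?thesis .
  qed
  have "measure_pmf.prob (bind_pmf L D) G = (\<Sum>l=0..lmax. pmf L l * measure_pmf.prob (D l) G)"
    unfolding measure_bind_pmf using assms(4)
    by (subst integral_measure_pmf[of "{0..lmax}"]) auto
  also have "\<dots> = (\<Sum>l=0..lmax. pmf L l * ((\<Sum>y=1..M. c y * ratio M y l) + (1 - \<eta>) ^ M))"
    using assms(3) by (intro sum.cong refl) (simp add: given_degree)
  also have "\<dots> = (\<Sum>y=1..M. c y * (\<Sum>l=0..lmax. pmf L l * ratio M y l))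
                  + (1 - \<eta>) ^ M * (\<Sum>l=0..lmax. pmf L l)"
    by (simp add: algebra_simps sum.distrib sum_distrib_left sum_distrib_right sum.swap[of _ "{0..lmax}"])
  also have "(\<Sum>l=0..lmax. pmf L l) = 1"
    using assms(4) by (intro sum_pmf_eq_1) auto
  finally have "measure_pmf.prob (bind_pmf L D) G
      = (\<Sum>y=1..M. c y * (\<Sum>l=0..lmax. pmf L l * ratio M y l)) + (1 - \<eta>) ^ M"
    by simp
  moreover have "bind_pmf L (\<lambda>l. bind_pmf (pmf_of_set {S. S \<subseteq> {1..M} \<and> card S = l}) (\<lambda>S.
      bind_pmf (Pi_pmf {1..M} False (\<lambda>_. bernoulli_pmf \<eta>)) (\<lambda>H. return_pmf (0, l, S, H)))) = bind_pmf L D"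
    unfolding D_def SS_def PH_def map_pmf_def ..
  ultimately show ?thesis
    unfolding G_def c_def by (simp only:)
qed

lemma measure_device_pmf_empty_battery_before_first_harvest:
  fixes \<eta> :: real
  assumes "0 \<le> \<eta>" "\<eta> \<le> 1" "lmax \<le> M" "set_pmf (Lam 0) \<subseteq> {0..lmax}"
  shows "measure_pmf.prob (device_pmf M \<eta> phi Lam)
           {(b, l, S, H). b = 0 \<and> before_first_harvest M S H} = Pe_lower M \<eta> lmax phi Lam"
proof -
  define G :: "dev_outcome set" where "G = {(b, l, S, H). b = 0 \<and> before_first_harvest M S H}"
  define F where "F b = bind_pmf (Lam b) (\<lambda>l. bind_pmf (pmf_of_set {S. S \<subseteq> {1..M} \<and> card S = l})
    (\<lambda>S. bind_pmf (Pi_pmf {1..M} False (\<lambda>_. bernoulli_pmf \<eta>)) (\<lambda>H. return_pmf (b, l, S, H))))" for b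
  have only_empty_battery: "measure_pmf.prob (F b) G = indicator {0} b * measure_pmf.prob (F 0) G" for b
    by (cases "b = 0") (auto simp: measure_pmf_zero_iff F_def G_def)
  have "measure_pmf.prob (device_pmf M \<eta> phi Lam) G
      = (\<integral>b. indicator {0} b * measure_pmf.prob (F 0) G \<partial>phi)"
    unfolding device_pmf_def F_def[symmetric] measure_bind_pmf
    by (rule Bochner_Integration.integral_cong[OF refl only_empty_battery])
  also have "\<dots> = pmf phi 0 * measure_pmf.prob (F 0) G"
    by (simp add: measure_pmf_single)
  also have "measure_pmf.prob (F 0) G
      = (\<Sum>y=1..M. \<eta> * (1 - \<eta>) ^ (y - 1) * (\<Sum>l=0..lmax. pmf (Lam 0) l * ratio M y l)) + (1 - \<eta>) ^ M"
    unfolding F_def G_def by (rule measure_empty_battery_before_first_harvest[OF assms])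
  finally show ?thesis
    unfolding G_def Pe_lower_def by (simp add: sum_distrib_left)
qed

theorem theorem1:
  fixes M E lmax :: nat and \<eta> :: real
    and phi :: "nat pmf" and Lam :: "nat \<Rightarrow> nat pmf"
    and \<Omega> :: "'w pmf" and X :: "'w \<Rightarrow> dev_outcome" and lost :: "'w \<Rightarrow> bool"
  assumes "M \<ge> 1" and "0 \<le> \<eta>" and "\<eta> \<le> 1" and "lmax \<le> M"
    and "set_pmf phi \<subseteq> {0..E}"
    and "\<And>b. b \<le> E \<Longrightarrow> set_pmf (Lam b) \<subseteq> {0..lmax}"
    and "map_pmf X \<Omega> = device_pmf M \<eta> phi Lam"
    and "\<And>\<omega>. transmitted E M (X \<omega>) = {} \<Longrightarrow> lost \<omega>"
  shows "measure_pmf.prob \<Omega> {\<omega>. lost \<omega>} \<ge> Pe_lower M \<eta> lmax phi Lam"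
proof -
  define G :: "dev_outcome set" where "G = {(b, l, S, H). b = 0 \<and> before_first_harvest M S H}"
  have "X -` G \<subseteq> {\<omega>. lost \<omega>}"
    using assms(8) transmitted_eq_empty_if_before_first_harvest by (auto simp: G_def)
  then have "measure_pmf.prob \<Omega> (X -` G) \<le> measure_pmf.prob \<Omega> {\<omega>. lost \<omega>}"
    by (rule measure_pmf.finite_measure_mono) simp
  moreover have "measure_pmf.prob \<Omega> (X -` G) = measure_pmf.prob (device_pmf M \<eta> phi Lam) G"
    by (metis assms(7) measure_map_pmf)
  moreover have "\<dots> = Pe_lower M \<eta> lmax phi Lam"
    unfolding G_def using assms(2-4,6)
    by (intro measure_device_pmf_empty_battery_before_first_harvest) auto
  ultimately show ?thesis by simp
qed

end
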